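(* Let $M(C,\bar\xi,\pi)$ be a Myller configuration with Darboux frame $(\bar\xi,\bar\mu,\bar v)$ and invariants $G,K,T$, with $(G,T)\neq(0,0)$ everywhere. Then: (i) if $K\equiv0$, $C$ is a $\bar\mu$-helix iff $\sigma_\mu=\mp\dfrac{T'G-TG'}{(G^2+T^2)^{3/2}}$ is constant; (ii) if $G\equiv0$, $C$ is a $\bar\mu$-helix iff $\sigma_\mu=\pm K/T$ is constant; (iii) if $T\equiv0$, $C$ is a $\bar\mu$-helix iff $\sigma_\mu=\pm K/G$ is constant.
   Context: Let $C$ be a smooth curve in $E^3$ parametrized by arclength $s$; primes denote $d/ds$. A Myller configuration $M(C,\bar\xi,\pi)$ consists of a smooth unit vector field $\bar\xi$ along $C$ and a smooth oriented plane field $\pi$ with $\bar\xi\in\pi$; $\bar v$ is the unit normal of $\pi$, $\bar\mu=\bar v\times\bar\xi$, and $\bar\xi'=G\bar\mu+K\bar v$, $\bar\mu'=-G\bar\xi+T\bar v$, $\bar v'=-K\bar\xi-T\bar\mu$. $C$ is a $\bar\mu$-helix if $\langle\bar\mu,\bar d_\mu\rangle$ is constant along $C$ for some constant unit vector $\bar d_\mu$. *)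

theory Defs
  imports "HOL-Analysis.Analysis" "HOL-Analysis.Cross3"
begin

definition iter_vderiv :: "nat \<Rightarrow> (real \<Rightarrow> 'a::real_normed_vector) \<Rightarrow> real \<Rightarrow> 'a" where
  "iter_vderiv k f = ((\<lambda>g s. vector_derivative g (at s)) ^^ k) f"

definition smooth_on :: "real set \<Rightarrow> (real \<Rightarrow> 'a::real_normed_vector) \<Rightarrow> bool" where
  "smooth_on I f \<longleftrightarrow> (\<forall>k. \<forall>t\<in>I. iter_vderiv k f differentiable (at t))"

definition myller_config ::
  "real set \<Rightarrow> (real \<Rightarrow> real^3) \<Rightarrow> (real \<Rightarrow> real^3) \<Rightarrow> (real \<Rightarrow> real^3) \<Rightarrow> (real \<Rightarrow> real^3)
   \<Rightarrow> (real \<Rightarrow> real) \<Rightarrow> (real \<Rightarrow> real) \<Rightarrow> (real \<Rightarrow> real) \<Rightarrow> bool" where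
  "myller_config I C xi mu v G K T \<longleftrightarrow>
     is_interval I \<and> open I \<and> I \<noteq> {} \<and>
     smooth_on I C \<and> (\<forall>s\<in>I. norm (vector_derivative C (at s)) = 1) \<and>
     smooth_on I xi \<and> smooth_on I v \<and>
     (\<forall>s\<in>I. norm (xi s) = 1 \<and> norm (v s) = 1 \<and> xi s \<bullet> v s = 0 \<and> mu s = cross3 (v s) (xi s)) \<and>
     smooth_on I G \<and> smooth_on I K \<and> smooth_on I T \<and>
     (\<forall>s\<in>I. (xi has_vector_derivative (G s *\<^sub>R mu s + K s *\<^sub>R v s)) (at s)) \<and>
     (\<forall>s\<in>I. (mu has_vector_derivative (- G s *\<^sub>R xi s + T s *\<^sub>R v s)) (at s)) \<and>
     (\<forall>s\<in>I. (v has_vector_derivative (- K s *\<^sub>R xi s - T s *\<^sub>R mu s)) (at s))"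

definition mu_helix :: "real set \<Rightarrow> (real \<Rightarrow> real^3) \<Rightarrow> bool" where
  "mu_helix I mu \<longleftrightarrow> (\<exists>d::real^3. norm d = 1 \<and> (\<exists>c. \<forall>s\<in>I. mu s \<bullet> d = c))"

definition const_on :: "real set \<Rightarrow> (real \<Rightarrow> real) \<Rightarrow> bool" where
  "const_on I f \<longleftrightarrow> (\<exists>c. \<forall>s\<in>I. f s = c)"

end

theory Submission
  imports Defs
begin

(* In all three cases the Darboux frame yields a Frenet-type frame (t, n, b) with t = mu,
  t' = kappa n, b' = -tau n and kappa nowhere zero, and the theorem is Lancret's: if t . d = c
  for a unit vector d, then n . d = 0, so b . d = e is constant, d = c t + e b, and
  differentiating gives c kappa = e tau with e <> 0, i.e. tau / kappa = c / e; conversely, if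
  tau = r kappa then r t + b is a nonzero constant vector at constant angle with t.
  For G = 0 take n = v, b = -xi; for T = 0 take n = -xi, b = -v. For K = 0 write
  (G, T) = rho (g, h) with rho = sqrt (G^2 + T^2) and take n = mu' / rho = h v - g xi,
  b = -(h xi + g v); then b' = omega n, where omega = (T' G - T G') / rho^2 is the angular
  velocity of the unit vector (g, h), so tau / kappa = -omega / rho. *)

lemma orthonormal_triple_expansion:
  fixes a b c x :: "'a::euclidean_space"
  assumes "DIM('a) = 3"
    and "norm a = 1" "norm b = 1" "norm c = 1"
    and "a \<bullet> b = 0" "a \<bullet> c = 0" "b \<bullet> c = 0"
  shows "x = (x \<bullet> a) *\<^sub>R a + (x \<bullet> b) *\<^sub>R b + (x \<bullet> c) *\<^sub>R c"
proof (rule ccontr)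
  define y where "y = x - ((x \<bullet> a) *\<^sub>R a + (x \<bullet> b) *\<^sub>R b + (x \<bullet> c) *\<^sub>R c)"
  assume "x \<noteq> (x \<bullet> a) *\<^sub>R a + (x \<bullet> b) *\<^sub>R b + (x \<bullet> c) *\<^sub>R c"
  then have "y \<noteq> 0"
    by (simp add: y_def)
  have unit: "a \<bullet> a = 1" "b \<bullet> b = 1" "c \<bullet> c = 1"
    using assms(2-4) by (simp_all add: norm_eq_1)
  have "y \<bullet> a = 0" "y \<bullet> b = 0" "y \<bullet> c = 0"
    using unit assms(5-7) by (simp_all add: y_def algebra_simps inner_commute)
  then have "pairwise orthogonal {a, b, c, y}"
    using assms(5-7) by (auto simp: pairwise_insert orthogonal_def inner_commute)
  moreover have "0 \<notin> {a, b, c, y}"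
    using assms(2-4) \<open>y \<noteq> 0\<close> by auto
  ultimately have "card {a, b, c, y} \<le> 3"
    using independent_card_le pairwise_orthogonal_independent assms(1) by metis
  moreover have "a \<noteq> b" "a \<noteq> c" "b \<noteq> c" "y \<noteq> a" "y \<noteq> b" "y \<noteq> c"
    using unit assms(5-7) \<open>y \<bullet> a = 0\<close> \<open>y \<bullet> b = 0\<close> \<open>y \<bullet> c = 0\<close> by auto
  then have "card {a, b, c, y} = 4"
    by simp
  ultimately show False
    by simp
qed

lemma has_vector_derivative_0_imp_constant_on:
  fixes f :: "real \<Rightarrow> 'a::banach"
  assumes "\<And>s. s \<in> S \<Longrightarrow> (f has_vector_derivative 0) (at s)" "connected S" "open S"
  shows "f constant_on S"
proof (rule has_derivative_zero_connected_constant_on[where K = "{}"])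
  show "continuous_on S f"
    using assms(1) by (meson continuous_at_imp_continuous_on has_vector_derivative_continuous)
  show "\<forall>s\<in>S - {}. (f has_derivative (\<lambda>h. 0)) (at s within S)"
    using assms(1) by (auto simp: has_vector_derivative_def intro: has_derivative_at_withinI)
qed (use assms in auto)

lemma has_vector_derivative_0_if_constant_on:
  assumes "(f has_vector_derivative f') (at s)" "f constant_on S" "open S" "s \<in> S"
  shows "f' = 0"
proof -
  obtain y where "\<And>x. x \<in> S \<Longrightarrow> f x = y"
    using assms(2) by (auto simp: constant_on_def)
  then have "((\<lambda>_. y) has_vector_derivative f') (at s)"
    using has_vector_derivative_transform_within_open assms(1,3,4) by metis
  then show ?thesis
    using vector_derivative_unique_at has_vector_derivative_const by blast
qed

lemma has_vector_derivative_inner_left: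
  assumes "(f has_vector_derivative f') (at s)"
  shows "((\<lambda>s. f s \<bullet> d) has_real_derivative f' \<bullet> d) (at s)"
  using bounded_linear.has_vector_derivative[OF bounded_linear_inner_left assms]
  by (simp add: has_real_derivative_iff_has_vector_derivative)

lemma powr_three_halves: "0 \<le> x \<Longrightarrow> x powr (3/2) = x * sqrt x"
  for x :: real
  using powr_add[of x 1 "1/2"] by (simp add: powr_half_sqrt)

lemma unit_direction_has_derivative:
  fixes G T :: "real \<Rightarrow> real"
  assumes "(G has_real_derivative G') (at s)" "(T has_real_derivative T') (at s)"
    and "(G s, T s) \<noteq> (0, 0)"
  defines "\<rho> \<equiv> \<lambda>s. sqrt (G s ^ 2 + T s ^ 2)"
    and "\<omega> \<equiv> (T' * G s - T s * G') / (G s ^ 2 + T s ^ 2)"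
  shows "((\<lambda>s. G s / \<rho> s) has_real_derivative - \<omega> * (T s / \<rho> s)) (at s)"
    and "((\<lambda>s. T s / \<rho> s) has_real_derivative \<omega> * (G s / \<rho> s)) (at s)"
proof -
  have pos: "G s ^ 2 + T s ^ 2 > 0"
    using assms(3) by (simp add: sum_power2_gt_zero_iff)
  have \<rho>_pos: "\<rho> s > 0" and \<rho>_sq: "\<rho> s ^ 2 = G s ^ 2 + T s ^ 2"
    using pos by (simp_all add: \<rho>_def)
  have d\<rho>: "(\<rho> has_real_derivative (G s * G' + T s * T') / \<rho> s) (at s)"
    using pos unfolding \<rho>_def
    by (auto intro!: derivative_eq_intros assms(1,2) simp: divide_simps)
  show "((\<lambda>s. G s / \<rho> s) has_real_derivative - \<omega> * (T s / \<rho> s)) (at s)"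
  proof (rule DERIV_cong[OF DERIV_divide[OF assms(1) d\<rho>]])
    show "\<rho> s \<noteq> 0"
      using \<rho>_pos by simp
    show "(G' * \<rho> s - G s * ((G s * G' + T s * T') / \<rho> s)) / (\<rho> s * \<rho> s) = - \<omega> * (T s / \<rho> s)"
      unfolding \<omega>_def \<rho>_sq[symmetric] using \<rho>_pos \<rho>_sq
      by (simp add: divide_simps power2_eq_square) (simp add: algebra_simps)
  qed
  show "((\<lambda>s. T s / \<rho> s) has_real_derivative \<omega> * (G s / \<rho> s)) (at s)"
  proof (rule DERIV_cong[OF DERIV_divide[OF assms(2) d\<rho>]])
    show "\<rho> s \<noteq> 0"
      using \<rho>_pos by simp
    show "(T' * \<rho> s - T s * ((G s * G' + T s * T') / \<rho> s)) / (\<rho> s * \<rho> s) = \<omega> * (G s / \<rho> s)"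
      unfolding \<omega>_def \<rho>_sq[symmetric] using \<rho>_pos \<rho>_sq
      by (simp add: field_simps power2_eq_square)
  qed
qed

lemma mu_helixI:
  assumes "d \<noteq> 0" "\<And>s. s \<in> I \<Longrightarrow> mu s \<bullet> d = c"
  shows "mu_helix I mu"
  unfolding mu_helix_def
proof (intro exI conjI ballI)
  show "norm (d /\<^sub>R norm d) = 1"
    using assms(1) by simp
  show "mu s \<bullet> (d /\<^sub>R norm d) = c / norm d" if "s \<in> I" for s
    using assms(2)[OF that] by (simp add: divide_inverse_commute)
qed

(* The derivative of n is not assumed: the argument never needs it. *)
locale frenet_frame =
  fixes I :: "real set" and t n b :: "real \<Rightarrow> real^3" and \<kappa> \<tau> :: "real \<Rightarrow> real"
  assumes interval: "is_interval I" and open_domain: "open I" and nonempty: "I \<noteq> {}"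
    and unit: "\<And>s. s \<in> I \<Longrightarrow> norm (t s) = 1" "\<And>s. s \<in> I \<Longrightarrow> norm (n s) = 1"
      "\<And>s. s \<in> I \<Longrightarrow> norm (b s) = 1"
    and orthogonal: "\<And>s. s \<in> I \<Longrightarrow> t s \<bullet> n s = 0" "\<And>s. s \<in> I \<Longrightarrow> t s \<bullet> b s = 0"
      "\<And>s. s \<in> I \<Longrightarrow> n s \<bullet> b s = 0"
    and tangent_derivative: "\<And>s. s \<in> I \<Longrightarrow> (t has_vector_derivative \<kappa> s *\<^sub>R n s) (at s)"
    and binormal_derivative: "\<And>s. s \<in> I \<Longrightarrow> (b has_vector_derivative - \<tau> s *\<^sub>R n s) (at s)"
    and curvature_nonzero: "\<And>s. s \<in> I \<Longrightarrow> \<kappa> s \<noteq> 0"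
begin

lemma connected_domain: "connected I"
  using interval is_interval_connected by blast

lemma derivative_0_if_constant_on:
  "(f has_vector_derivative f') (at s) \<Longrightarrow> f constant_on I \<Longrightarrow> s \<in> I \<Longrightarrow> f' = 0"
  using has_vector_derivative_0_if_constant_on open_domain by blast

lemma helix_imp_const_ratio:
  assumes "mu_helix I t"
  shows "const_on I (\<lambda>s. \<tau> s / \<kappa> s)"
proof -
  obtain d c where d: "norm d = 1" and c: "\<And>s. s \<in> I \<Longrightarrow> t s \<bullet> d = c"
    using assms unfolding mu_helix_def by blast
  have normal_perp: "n s \<bullet> d = 0" if "s \<in> I" for s
  proof -
    have "(\<lambda>s. t s \<bullet> d) constant_on I"
      using c by (auto simp: constant_on_def)
    then have "\<kappa> s * (n s \<bullet> d) = 0"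
      using derivative_0_if_constant_on that has_vector_derivative_inner_left[OF tangent_derivative]
      by (fastforce simp: has_real_derivative_iff_has_vector_derivative)
    then show ?thesis
      using curvature_nonzero that by simp
  qed
  have "(\<lambda>s. b s \<bullet> d) constant_on I"
  proof (rule has_field_derivative_0_imp_constant_on[OF _ connected_domain open_domain])
    show "((\<lambda>s. b s \<bullet> d) has_real_derivative 0) (at s)" if "s \<in> I" for s
      using has_vector_derivative_inner_left[OF binormal_derivative[OF that], of d] normal_perp[OF that]
      by simp
  qed
  then obtain e where e: "\<And>s. s \<in> I \<Longrightarrow> b s \<bullet> d = e"
    by (auto simp: constant_on_def)
  have d_eq: "d = c *\<^sub>R t s + e *\<^sub>R b s" if "s \<in> I" for s
    using orthonormal_triple_expansion[OF _ unit[OF that] orthogonal[OF that], of d]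
      c[OF that] e[OF that] normal_perp[OF that]
    by (simp add: inner_commute)
  have balance: "c * \<kappa> s = e * \<tau> s" if "s \<in> I" for s
  proof -
    have "((\<lambda>s. c *\<^sub>R t s + e *\<^sub>R b s) has_vector_derivative (c * \<kappa> s - e * \<tau> s) *\<^sub>R n s) (at s)"
      using tangent_derivative[OF that] binormal_derivative[OF that]
      by (auto intro!: derivative_eq_intros simp: algebra_simps)
    moreover have "(\<lambda>s. c *\<^sub>R t s + e *\<^sub>R b s) constant_on I"
      using d_eq by (auto simp: constant_on_def intro!: exI[of _ d])
    ultimately have "(c * \<kappa> s - e * \<tau> s) *\<^sub>R n s = 0"
      using derivative_0_if_constant_on that by blast
    then show ?thesis
      using unit(2)[OF that] by auto
  qed
  obtain s0 where s0: "s0 \<in> I"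
    using nonempty by blast
  have "e \<noteq> 0"
  proof
    assume "e = 0"
    then have "c = 0"
      using balance[OF s0] curvature_nonzero[OF s0] by simp
    then show False
      using d_eq[OF s0] d \<open>e = 0\<close> by simp
  qed
  then have "\<tau> s / \<kappa> s = c / e" if "s \<in> I" for s
    using balance[OF that] curvature_nonzero[OF that] by (simp add: field_simps)
  then show ?thesis
    unfolding const_on_def by blast
qed

lemma const_ratio_imp_helix:
  assumes "const_on I (\<lambda>s. \<tau> s / \<kappa> s)"
  shows "mu_helix I t"
proof -
  obtain r where r: "\<And>s. s \<in> I \<Longrightarrow> \<tau> s = r * \<kappa> s"
    using assms curvature_nonzero unfolding const_on_def by (metis nonzero_eq_divide_eq)
  have "(\<lambda>s. r *\<^sub>R t s + b s) constant_on I"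
  proof (rule has_vector_derivative_0_imp_constant_on[OF _ connected_domain open_domain])
    show "((\<lambda>s. r *\<^sub>R t s + b s) has_vector_derivative 0) (at s)" if "s \<in> I" for s
      using tangent_derivative[OF that] binormal_derivative[OF that] r[OF that]
      by (auto intro!: derivative_eq_intros)
  qed
  then obtain D where D: "\<And>s. s \<in> I \<Longrightarrow> r *\<^sub>R t s + b s = D"
    by (auto simp: constant_on_def)
  obtain s0 where s0: "s0 \<in> I"
    using nonempty by blast
  have "b s0 \<bullet> D = 1"
    using D[OF s0, symmetric] unit(3)[OF s0] orthogonal(2)[OF s0]
    by (simp add: inner_add_right inner_commute norm_eq_1)
  then have "D \<noteq> 0"
    by auto
  moreover have "t s \<bullet> D = r" if "s \<in> I" for s
    using D[OF that, symmetric] unit(1)[OF that] orthogonal(2)[OF that]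
    by (simp add: inner_add_right norm_eq_1)
  ultimately show ?thesis
    by (rule mu_helixI)
qed

theorem lancret: "mu_helix I t \<longleftrightarrow> const_on I (\<lambda>s. \<tau> s / \<kappa> s)"
  using helix_imp_const_ratio const_ratio_imp_helix by blast

end

lemma smooth_on_imp_has_real_derivative:
  assumes "smooth_on I f" "s \<in> I"
  shows "(f has_real_derivative deriv f s) (at s)"
proof -
  have "iter_vderiv 0 f differentiable (at s)"
    using assms unfolding smooth_on_def by blast
  then show ?thesis
    by (simp add: iter_vderiv_def DERIV_deriv_iff_real_differentiable)
qed

lemma const_on_cong: "(\<And>s. s \<in> I \<Longrightarrow> f s = g s) \<Longrightarrow> const_on I f \<longleftrightarrow> const_on I g"
  by (simp add: const_on_def)

locale myller_configuration =
  fixes I :: "real set" and C xi mu v :: "real \<Rightarrow> real^3" and G K T :: "real \<Rightarrow> real"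
  assumes config: "myller_config I C xi mu v G K T"
begin

lemma domain: "is_interval I" "open I" "I \<noteq> {}"
  using config unfolding myller_config_def by auto

lemma xi_derivative: "s \<in> I \<Longrightarrow> (xi has_vector_derivative G s *\<^sub>R mu s + K s *\<^sub>R v s) (at s)"
  and mu_derivative: "s \<in> I \<Longrightarrow> (mu has_vector_derivative - G s *\<^sub>R xi s + T s *\<^sub>R v s) (at s)"
  and v_derivative: "s \<in> I \<Longrightarrow> (v has_vector_derivative - K s *\<^sub>R xi s - T s *\<^sub>R mu s) (at s)"
  using config unfolding myller_config_def by auto

lemma invariant_derivatives:
  "s \<in> I \<Longrightarrow> (G has_real_derivative deriv G s) (at s)"
  "s \<in> I \<Longrightarrow> (T has_real_derivative deriv T s) (at s)"
  using config smooth_on_imp_has_real_derivative unfolding myller_config_def by auto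

lemma darboux_frame:
  assumes "s \<in> I"
  shows "norm (xi s) = 1" "norm (v s) = 1" "xi s \<bullet> v s = 0" "mu s = cross3 (v s) (xi s)"
  using config assms unfolding myller_config_def by auto

lemma unit:
  assumes "s \<in> I"
  shows "norm (xi s) = 1" "norm (v s) = 1" "norm (mu s) = 1"
proof -
  show "norm (xi s) = 1" "norm (v s) = 1"
    using darboux_frame[OF assms] by simp_all
  have "(norm (mu s))\<^sup>2 = 1"
    using norm_cross_dot[of "v s" "xi s"] darboux_frame[OF assms] by (simp add: inner_commute)
  then show "norm (mu s) = 1"
    using norm_ge_zero[of "mu s"] by (auto simp: power2_eq_1_iff)
qed

lemma orthogonal:
  assumes "s \<in> I"
  shows "xi s \<bullet> v s = 0" "mu s \<bullet> xi s = 0" "mu s \<bullet> v s = 0"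
  using darboux_frame[OF assms] dot_cross_self by (auto simp: inner_commute)

lemma helix_iff_G_zero:
  assumes G0: "\<And>s. s \<in> I \<Longrightarrow> G s = 0" and T_nonzero: "\<And>s. s \<in> I \<Longrightarrow> T s \<noteq> 0"
  shows "mu_helix I mu \<longleftrightarrow> const_on I (\<lambda>s. K s / T s)"
proof -
  have "frenet_frame I mu v (\<lambda>s. - xi s) T K"
  proof
    fix s assume s: "s \<in> I"
    show "(mu has_vector_derivative T s *\<^sub>R v s) (at s)"
      using mu_derivative[OF s] G0[OF s] by simp
    show "((\<lambda>s. - xi s) has_vector_derivative - K s *\<^sub>R v s) (at s)"
      using xi_derivative[OF s] G0[OF s] by (auto intro!: derivative_eq_intros)
  qed (use domain unit orthogonal T_nonzero in \<open>auto simp: inner_commute\<close>)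
  then show ?thesis
    by (rule frenet_frame.lancret)
qed

lemma helix_iff_T_zero:
  assumes T0: "\<And>s. s \<in> I \<Longrightarrow> T s = 0" and G_nonzero: "\<And>s. s \<in> I \<Longrightarrow> G s \<noteq> 0"
  shows "mu_helix I mu \<longleftrightarrow> const_on I (\<lambda>s. K s / G s)"
proof -
  have "frenet_frame I mu (\<lambda>s. - xi s) (\<lambda>s. - v s) G K"
  proof
    fix s assume s: "s \<in> I"
    show "(mu has_vector_derivative G s *\<^sub>R - xi s) (at s)"
      using mu_derivative[OF s] T0[OF s] by simp
    show "((\<lambda>s. - v s) has_vector_derivative - K s *\<^sub>R - xi s) (at s)"
      using v_derivative[OF s] T0[OF s] by (auto intro!: derivative_eq_intros)
  qed (use domain unit orthogonal G_nonzero in \<open>auto simp: inner_commute\<close>)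
  then show ?thesis
    by (rule frenet_frame.lancret)
qed

lemma helix_iff_K_zero:
  assumes K0: "\<And>s. s \<in> I \<Longrightarrow> K s = 0" and GT: "\<And>s. s \<in> I \<Longrightarrow> (G s, T s) \<noteq> (0, 0)"
  shows "mu_helix I mu \<longleftrightarrow>
    const_on I (\<lambda>s. - (deriv T s * G s - T s * deriv G s) / (G s ^ 2 + T s ^ 2) powr (3/2))"
proof -
  define \<rho> where "\<rho> s = sqrt (G s ^ 2 + T s ^ 2)" for s
  define \<omega> where "\<omega> s = (deriv T s * G s - T s * deriv G s) / (G s ^ 2 + T s ^ 2)" for s
  define g where "g s = G s / \<rho> s" for s
  define h where "h s = T s / \<rho> s" for s
  have \<rho>_pos: "\<rho> s > 0" if "s \<in> I" for s
    using GT[OF that] by (auto simp: \<rho>_def sum_power2_gt_zero_iff)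
  have G_eq: "G s = \<rho> s * g s" and T_eq: "T s = \<rho> s * h s" if "s \<in> I" for s
    using \<rho>_pos[OF that] by (simp_all add: g_def h_def)
  have gh_unit: "g s ^ 2 + h s ^ 2 = 1" if "s \<in> I" for s
    using GT[OF that] by (simp add: g_def h_def \<rho>_def divide_simps)
  have g_derivative: "(g has_real_derivative - \<omega> s * h s) (at s)"
    and h_derivative: "(h has_real_derivative \<omega> s * g s) (at s)" if "s \<in> I" for s
    using unit_direction_has_derivative[OF invariant_derivatives[OF that] GT[OF that]]
    unfolding g_def[abs_def] h_def[abs_def] \<rho>_def[abs_def] \<omega>_def by simp_all
  have "frenet_frame I mu (\<lambda>s. h s *\<^sub>R v s - g s *\<^sub>R xi s) (\<lambda>s. - (h s *\<^sub>R xi s + g s *\<^sub>R v s))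
      \<rho> (\<lambda>s. - \<omega> s)"
  proof
    fix s assume s: "s \<in> I"
    show "(mu has_vector_derivative \<rho> s *\<^sub>R (h s *\<^sub>R v s - g s *\<^sub>R xi s)) (at s)"
      using mu_derivative[OF s] G_eq[OF s] T_eq[OF s] by (simp add: algebra_simps)
    have "G s * h s = T s * g s"
      using G_eq[OF s] T_eq[OF s] by simp
    then show "((\<lambda>s. - (h s *\<^sub>R xi s + g s *\<^sub>R v s)) has_vector_derivative
        - (- \<omega> s) *\<^sub>R (h s *\<^sub>R v s - g s *\<^sub>R xi s)) (at s)"
      using g_derivative[OF s] h_derivative[OF s] xi_derivative[OF s] v_derivative[OF s] K0[OF s]
      by (auto intro!: derivative_eq_intros simp: algebra_simps)
    show "norm (h s *\<^sub>R v s - g s *\<^sub>R xi s) = 1" "norm (- (h s *\<^sub>R xi s + g s *\<^sub>R v s)) = 1"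
      using gh_unit[OF s] unit[OF s] orthogonal[OF s]
      by (simp_all add: norm_eq_1 inner_diff inner_add algebra_simps inner_commute power2_eq_square)
    show "(h s *\<^sub>R v s - g s *\<^sub>R xi s) \<bullet> - (h s *\<^sub>R xi s + g s *\<^sub>R v s) = 0"
      using unit[OF s] orthogonal[OF s] by (simp add: norm_eq_1 inner_diff inner_add algebra_simps inner_commute)
    show "\<rho> s \<noteq> 0"
      using \<rho>_pos[OF s] by simp
  qed (use domain unit orthogonal in \<open>auto simp: inner_diff inner_add inner_commute\<close>)
  then have "mu_helix I mu \<longleftrightarrow> const_on I (\<lambda>s. - \<omega> s / \<rho> s)"
    by (rule frenet_frame.lancret)
  also have "\<dots> \<longleftrightarrow>
      const_on I (\<lambda>s. - (deriv T s * G s - T s * deriv G s) / (G s ^ 2 + T s ^ 2) powr (3/2))"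
    by (rule const_on_cong) (simp add: \<omega>_def \<rho>_def powr_three_halves minus_divide_left)
  finally show ?thesis .
qed

end

theorem corollary19:
  assumes M: "myller_config I C xi mu v G K T"
    and GT: "\<forall>s\<in>I. (G s, T s) \<noteq> (0, 0)"
  shows "((\<forall>s\<in>I. K s = 0) \<longrightarrow>
            (mu_helix I mu \<longleftrightarrow>
             const_on I (\<lambda>s. - (deriv T s * G s - T s * deriv G s) / (G s ^ 2 + T s ^ 2) powr (3/2))))
       \<and> ((\<forall>s\<in>I. G s = 0) \<longrightarrow> (mu_helix I mu \<longleftrightarrow> const_on I (\<lambda>s. K s / T s)))
       \<and> ((\<forall>s\<in>I. T s = 0) \<longrightarrow> (mu_helix I mu \<longleftrightarrow> const_on I (\<lambda>s. K s / G s)))"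
proof -
  interpret myller_configuration I C xi mu v G K T
    by unfold_locales (fact M)
  show ?thesis
    using GT helix_iff_K_zero helix_iff_G_zero helix_iff_T_zero by (intro conjI impI) auto
qed

end
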